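(* Let $n,m\ge 1$. For each $i\in\{1,\dots,n\}$ let $\Gamma_i\in\mathbb{R}^{m\times m}$ be a diagonal matrix with diagonal entries in $\{0,1\}$, let $\mathcal{B}_i\in\mathbb{R}^{l_i\times m}$, $Z_i\in\mathbb{R}^{k_i\times l_i}$ and $\mu_i\ge 0$ be such that $M_i=\mathcal{B}_i\Gamma_i\Gamma_i\mathcal{B}_i^{\top}+\mu_iZ_i^{\top}Z_i$ is invertible, and set $P_i=\Gamma_i-\Gamma_i\mathcal{B}_i^{\top}M_i^{-1}\mathcal{B}_i\Gamma_i$ and $\mathcal{P}_{III}=\sum_{i=1}^nP_i$. Let $\mathbf{1}\in\mathbb{R}^m$ be the all-ones vector. Then the following statements are equivalent: (a) $\mathcal{P}_{III}\mathbf{1}=0$; (b) $P_i\mathbf{1}=0$ for every $i\in\{1,\dots,n\}$; (c) for every $i\in\{1,\dots,n\}$ there exists $x_i\in\mathbb{R}^{l_i}$ with $\Gamma_i\mathcal{B}_i^{\top}x_i=\Gamma_i\mathbf{1}$ and, if $\mu_i>0$, additionally $Z_ix_i=0$.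
   Context: In the paper, $\Gamma_i$ is the visibility matrix of the $i$-th (partial) datum shape $D_i\in\mathbb{R}^{d\times m}$ (its $j$-th diagonal entry is $1$ iff the $j$-th point is observed in $D_i$), $\mathcal{B}_i=\mathcal{B}_i(D_i)$ is the matrix of features of the points of $D_i$ under a linear basis warp, $Z_i$ its regularization matrix and $\mu_i$ its smoothing weight. *)

theory Defs
  imports "Jordan_Normal_Form.Matrix"
begin

definition mat_inv :: "real mat \<Rightarrow> real mat" where
  "mat_inv A = (SOME B. inverts_mat A B \<and> inverts_mat B A)"

definition M_mat :: "real mat \<Rightarrow> real mat \<Rightarrow> real mat \<Rightarrow> real \<Rightarrow> real mat" where
  "M_mat G B Z mu = B * G * G * transpose_mat B + mu \<cdot>\<^sub>m (transpose_mat Z * Z)"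

definition P_mat :: "real mat \<Rightarrow> real mat \<Rightarrow> real mat \<Rightarrow> real \<Rightarrow> real mat" where
  "P_mat G B Z mu = G - G * transpose_mat B * mat_inv (M_mat G B Z mu) * B * G"

definition ones_vec :: "nat \<Rightarrow> real vec" where
  "ones_vec m = vec m (\<lambda>_. 1)"

end

theory Submission
  imports Defs
begin

text \<open>For one datum, \<open>x = M\<^sup>-\<^sup>1 B \<Gamma> y\<close> is the regularised least-squares fit of \<open>\<Gamma> y\<close> by
  \<open>\<Gamma> B\<^sup>T x\<close> with penalty \<open>\<mu> |Z x|\<^sup>2\<close>, and \<open>P y = \<Gamma> (y - B\<^sup>T x)\<close> is its residual. Since \<open>\<Gamma>\<close> is a
  symmetric idempotent, the normal equations give \<open>y \<bullet> P y = |P y|\<^sup>2 + \<mu> |Z x|\<^sup>2 \<ge> 0\<close>. So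
  \<open>\<one> \<bullet> P\<^sub>I\<^sub>I\<^sub>I \<one> = \<Sum>\<^sub>i \<one> \<bullet> P\<^sub>i \<one>\<close> is a sum of non-negative terms, and \<open>P\<^sub>I\<^sub>I\<^sub>I \<one> = 0\<close> forces every
  \<open>P\<^sub>i \<one> = 0\<close>. Finally \<open>P y = 0\<close> says that the fit reproduces \<open>\<Gamma> y\<close> exactly at no penalty; conversely any
  \<open>x\<close> as in (c) solves the normal equations \<open>M x = B \<Gamma> y\<close> and hence is the fit.\<close>

lemma
  fixes A :: "real mat"
  assumes A: "A \<in> carrier_mat n n" and inv: "invertible_mat A"
  shows mat_inv_carrier_mat: "mat_inv A \<in> carrier_mat n n"
    and mat_inv_right: "A * mat_inv A = 1\<^sub>m n"
    and mat_inv_left: "mat_inv A * A = 1\<^sub>m n"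
proof -
  obtain B where "inverts_mat A B \<and> inverts_mat B A"
    using inv unfolding invertible_mat_def by blast
  then have "inverts_mat A (mat_inv A) \<and> inverts_mat (mat_inv A) A"
    unfolding mat_inv_def by (rule someI)
  then have right: "A * mat_inv A = 1\<^sub>m n" and left: "mat_inv A * A = 1\<^sub>m (dim_row (mat_inv A))"
    using A unfolding inverts_mat_def by auto
  have "dim_col (mat_inv A) = n"
    using arg_cong[OF right, of dim_col] by simp
  moreover have "dim_row (mat_inv A) = n"
    using arg_cong[OF left, of dim_col] A by simp
  ultimately show "mat_inv A \<in> carrier_mat n n" by blast
  show "A * mat_inv A = 1\<^sub>m n" by (fact right)
  show "mat_inv A * A = 1\<^sub>m n" using left \<open>dim_row (mat_inv A) = n\<close> by simp
qed

lemma transpose_diagonal_mat: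
  assumes "A \<in> carrier_mat n n" and "diagonal_mat A"
  shows "transpose_mat A = A"
proof (rule eq_matI)
  fix i j assume "i < dim_row A" "j < dim_col A"
  then show "transpose_mat A $$ (i, j) = A $$ (i, j)"
    using assms unfolding diagonal_mat_def by (cases "i = j") auto
qed (use assms in auto)

lemma diagonal_01_mat_idem:
  fixes A :: "'a :: semiring_1 mat"
  assumes A: "A \<in> carrier_mat n n" and diag: "diagonal_mat A"
    and entries: "\<And>j. j < n \<Longrightarrow> A $$ (j, j) \<in> {0, 1}"
  shows "A * A = A"
proof (rule eq_matI)
  fix i j assume "i < dim_row A" "j < dim_col A"
  then have ij: "i < n" "j < n" using A by auto
  have off_diag: "A $$ (i, q) = 0" if "q < n" "q \<noteq> i" for q
    using diag A that ij unfolding diagonal_mat_def by auto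
  have "(A * A) $$ (i, j) = (\<Sum>q\<in>{0..<n}. A $$ (i, q) * A $$ (q, j))"
    using A ij by (simp add: scalar_prod_def)
  also have "\<dots> = A $$ (i, i) * A $$ (i, j)"
    using off_diag ij by (subst sum.remove[of _ i]) auto
  also have "\<dots> = A $$ (i, j)"
    using entries[of i] diag A ij unfolding diagonal_mat_def by (cases "i = j") auto
  finally show "(A * A) $$ (i, j) = A $$ (i, j)" .
qed (use A in auto)

lemma smult_mult_mat_vec:
  fixes A :: "'a :: comm_semiring_0 mat"
  assumes "dim_vec v = dim_col A"
  shows "(c \<cdot>\<^sub>m A) *\<^sub>v v = c \<cdot>\<^sub>v (A *\<^sub>v v)"
  using assms by (intro eq_vecI) (auto simp: scalar_prod_def sum_distrib_left ac_simps)

lemma assoc_mult_mat_vec_dims: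
  fixes A :: "'a :: semiring_0 mat"
  assumes "dim_col A = dim_row B" and "dim_vec v = dim_col B"
  shows "(A * B) *\<^sub>v v = A *\<^sub>v (B *\<^sub>v v)"
  using assms
  by (intro assoc_mult_mat_vec[of A "dim_row A" "dim_col A" B "dim_col B" v] carrier_matI carrier_vecI)
    simp_all

lemma scalar_prod_self_nonneg: "0 \<le> (v :: real vec) \<bullet> v"
  using conjugate_square_ge_0_vec[of v] unfolding vec_conjugate_real .

lemma scalar_prod_self_eq_0_iff:
  "(v :: real vec) \<in> carrier_vec n \<Longrightarrow> v \<bullet> v = 0 \<longleftrightarrow> v = 0\<^sub>v n"
  using conjugate_square_eq_0_vec[of v n] unfolding vec_conjugate_real .

locale regularized_projection =
  fixes G B Z :: "real mat" and mu :: real and m l k :: nat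
  assumes G_carrier: "G \<in> carrier_mat m m"
    and G_idem: "G * G = G"
    and G_symmetric: "transpose_mat G = G"
    and B_carrier: "B \<in> carrier_mat l m"
    and Z_carrier: "Z \<in> carrier_mat k l"
    and M_invertible: "invertible_mat (M_mat G B Z mu)"
begin

abbreviation M :: "real mat" where "M \<equiv> M_mat G B Z mu"
abbreviation P :: "real mat" where "P \<equiv> P_mat G B Z mu"

definition coeffs :: "real vec \<Rightarrow> real vec" where
  "coeffs y = mat_inv M *\<^sub>v (B *\<^sub>v (G *\<^sub>v y))"

lemma M_carrier: "M \<in> carrier_mat l l"
  using G_carrier B_carrier Z_carrier unfolding M_mat_def by auto

lemma mat_inv_M_carrier: "mat_inv M \<in> carrier_mat l l"
  using M_carrier M_invertible by (rule mat_inv_carrier_mat)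

lemmas dims[simp] = carrier_matD[OF G_carrier] carrier_matD[OF B_carrier] carrier_matD[OF Z_carrier]
  carrier_matD[OF M_carrier] carrier_matD[OF mat_inv_M_carrier]

text \<open>All dimensions are known here, so associativity and carrier membership are reasoned about
  through dimensions: the carrier-based simp rules of the library make simp search for the
  intermediate dimensions, which diverges on the products below.\<close>

declare assoc_mult_mat[simp del] assoc_mult_mat_vec[simp del] mult_mat_vec_carrier[simp del]
  carrier_vecD[simp del]
declare assoc_mult_mat_vec_dims[simp] carrier_dim_vec[simp]

lemma P_carrier: "P \<in> carrier_mat m m"
  unfolding P_mat_def by (rule carrier_matI) simp_all

lemmas P_dims[simp] = carrier_matD[OF P_carrier]

lemma dim_coeffs[simp]: "dim_vec (coeffs y) = l"
  unfolding coeffs_def by simp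

lemma G_mult_G_vec[simp]:
  assumes "dim_vec v = m"
  shows "G *\<^sub>v (G *\<^sub>v v) = G *\<^sub>v v"
proof -
  have "G *\<^sub>v (G *\<^sub>v v) = (G * G) *\<^sub>v v"
    using assms by (intro assoc_mult_mat_vec_dims[symmetric]) simp_all
  then show ?thesis unfolding G_idem .
qed

lemma M_mult_vec:
  assumes "dim_vec x = l"
  shows "M *\<^sub>v x = B *\<^sub>v (G *\<^sub>v (transpose_mat B *\<^sub>v x)) + mu \<cdot>\<^sub>v (transpose_mat Z *\<^sub>v (Z *\<^sub>v x))"
proof -
  have "M *\<^sub>v x = (B * G * G * transpose_mat B) *\<^sub>v x + (mu \<cdot>\<^sub>m (transpose_mat Z * Z)) *\<^sub>v x"
    unfolding M_mat_def
    by (rule add_mult_distrib_mat_vec[of _ l l]) (auto intro!: carrier_matI carrier_vecI simp: assms)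
  also have "(B * G * G * transpose_mat B) *\<^sub>v x = B *\<^sub>v (G *\<^sub>v (transpose_mat B *\<^sub>v x))"
    using assms by simp
  also have "(mu \<cdot>\<^sub>m (transpose_mat Z * Z)) *\<^sub>v x = mu \<cdot>\<^sub>v (transpose_mat Z *\<^sub>v (Z *\<^sub>v x))"
    using assms by (simp add: smult_mult_mat_vec)
  finally show ?thesis .
qed

lemma M_mult_coeffs:
  assumes "dim_vec y = m"
  shows "M *\<^sub>v coeffs y = B *\<^sub>v (G *\<^sub>v y)"
proof -
  have "M *\<^sub>v coeffs y = (M * mat_inv M) *\<^sub>v (B *\<^sub>v (G *\<^sub>v y))"
    unfolding coeffs_def using assms by simp
  also have "\<dots> = B *\<^sub>v (G *\<^sub>v y)"
    unfolding mat_inv_right[OF M_carrier M_invertible] using assms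
    by (intro one_mult_mat_vec carrier_vecI) simp
  finally show ?thesis .
qed

lemma coeffs_unique:
  assumes "dim_vec x = l" and "M *\<^sub>v x = B *\<^sub>v (G *\<^sub>v y)"
  shows "coeffs y = x"
proof -
  have "coeffs y = (mat_inv M * M) *\<^sub>v x"
    unfolding coeffs_def assms(2)[symmetric] using assms(1) by simp
  also have "\<dots> = x"
    unfolding mat_inv_left[OF M_carrier M_invertible] using assms(1) by (intro one_mult_mat_vec carrier_vecI)
  finally show ?thesis .
qed

lemma P_mult_vec:
  assumes "dim_vec y = m"
  shows "P *\<^sub>v y = G *\<^sub>v y - G *\<^sub>v (transpose_mat B *\<^sub>v coeffs y)"
proof -
  have "P *\<^sub>v y = G *\<^sub>v y - (G * transpose_mat B * mat_inv M * B * G) *\<^sub>v y"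
    unfolding P_mat_def
    by (rule minus_mult_distrib_mat_vec[of _ m m]) (auto intro!: carrier_matI carrier_vecI simp: assms)
  also have "(G * transpose_mat B * mat_inv M * B * G) *\<^sub>v y = G *\<^sub>v (transpose_mat B *\<^sub>v coeffs y)"
    unfolding coeffs_def using assms by simp
  finally show ?thesis .
qed

lemma G_mult_P_vec[simp]:
  assumes "dim_vec y = m"
  shows "G *\<^sub>v (P *\<^sub>v y) = P *\<^sub>v y"
  unfolding P_mult_vec[OF assms] using assms by (simp add: mult_minus_distrib_mat_vec[OF G_carrier])

lemma scalar_prod_G_mult_vec:
  assumes "dim_vec u = m" and "dim_vec v = m"
  shows "u \<bullet> (G *\<^sub>v v) = (G *\<^sub>v u) \<bullet> v"
  using transpose_vec_mult_scalar[OF G_carrier, of v u] assms G_symmetric by simp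

lemma B_mult_P_vec:
  assumes y: "dim_vec y = m"
  shows "B *\<^sub>v (P *\<^sub>v y) = mu \<cdot>\<^sub>v (transpose_mat Z *\<^sub>v (Z *\<^sub>v coeffs y))"
proof -
  let ?x = "coeffs y"
  have "B *\<^sub>v (P *\<^sub>v y) = B *\<^sub>v (G *\<^sub>v y) - B *\<^sub>v (G *\<^sub>v (transpose_mat B *\<^sub>v ?x))"
    unfolding P_mult_vec[OF y] using y by (simp add: mult_minus_distrib_mat_vec[OF B_carrier])
  also have "\<dots> = M *\<^sub>v ?x - B *\<^sub>v (G *\<^sub>v (transpose_mat B *\<^sub>v ?x))"
    unfolding M_mult_coeffs[OF y] ..
  also have "\<dots> = mu \<cdot>\<^sub>v (transpose_mat Z *\<^sub>v (Z *\<^sub>v ?x))"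
    unfolding M_mult_vec[OF dim_coeffs] by (intro eq_vecI) auto
  finally show ?thesis .
qed

lemma scalar_prod_P_mult_vec:
  assumes y: "dim_vec y = m"
  shows "y \<bullet> (P *\<^sub>v y) = (P *\<^sub>v y) \<bullet> (P *\<^sub>v y) + mu * ((Z *\<^sub>v coeffs y) \<bullet> (Z *\<^sub>v coeffs y))"
proof -
  let ?x = "coeffs y" and ?r = "P *\<^sub>v y"
  have "?r \<bullet> ?r = ?r \<bullet> (G *\<^sub>v y - G *\<^sub>v (transpose_mat B *\<^sub>v ?x))"
    by (simp only: P_mult_vec[OF y])
  also have "\<dots> = ?r \<bullet> (G *\<^sub>v y) - ?r \<bullet> (G *\<^sub>v (transpose_mat B *\<^sub>v ?x))"
    using y by (intro scalar_prod_minus_distrib[of _ m]) simp_all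
  also have "?r \<bullet> (G *\<^sub>v y) = y \<bullet> ?r"
    using scalar_prod_G_mult_vec[of ?r y] comm_scalar_prod[of ?r m y] y by simp
  also have "?r \<bullet> (G *\<^sub>v (transpose_mat B *\<^sub>v ?x)) = ?r \<bullet> (transpose_mat B *\<^sub>v ?x)"
    using scalar_prod_G_mult_vec[of ?r "transpose_mat B *\<^sub>v ?x"] y by simp
  also have "\<dots> = (B *\<^sub>v ?r) \<bullet> ?x"
    using transpose_vec_mult_scalar[of "transpose_mat B" m l ?x ?r] B_carrier y by simp
  also have "\<dots> = mu * ((Z *\<^sub>v ?x) \<bullet> (Z *\<^sub>v ?x))"
    unfolding B_mult_P_vec[OF y] using transpose_vec_mult_scalar[OF Z_carrier, of ?x "Z *\<^sub>v ?x"] by simp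
  finally show ?thesis by simp
qed

lemma scalar_prod_P_mult_vec_nonneg:
  assumes "0 \<le> mu" and "dim_vec y = m"
  shows "0 \<le> y \<bullet> (P *\<^sub>v y)"
  unfolding scalar_prod_P_mult_vec[OF assms(2)]
  using assms(1) scalar_prod_self_nonneg by simp

lemma scalar_prod_P_mult_vec_eq_0_iff:
  assumes "0 \<le> mu" and y: "dim_vec y = m"
  shows "y \<bullet> (P *\<^sub>v y) = 0 \<longleftrightarrow> P *\<^sub>v y = 0\<^sub>v m \<and> (0 < mu \<longrightarrow> Z *\<^sub>v coeffs y = 0\<^sub>v k)"
  unfolding scalar_prod_P_mult_vec[OF y]
  using assms scalar_prod_self_eq_0_iff[of "P *\<^sub>v y" m] scalar_prod_self_eq_0_iff[of "Z *\<^sub>v coeffs y" k]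
    scalar_prod_self_nonneg[of "P *\<^sub>v y"] scalar_prod_self_nonneg[of "Z *\<^sub>v coeffs y"]
  by (auto simp: add_nonneg_eq_0_iff)

lemma P_mult_vec_eq_0_iff:
  assumes "0 \<le> mu" and y: "dim_vec y = m"
  shows "P *\<^sub>v y = 0\<^sub>v m \<longleftrightarrow>
    (\<exists>x \<in> carrier_vec l. G * transpose_mat B *\<^sub>v x = G *\<^sub>v y \<and> (0 < mu \<longrightarrow> Z *\<^sub>v x = 0\<^sub>v k))"
proof
  assume P0: "P *\<^sub>v y = 0\<^sub>v m"
  let ?x = "coeffs y"
  have "0 < mu \<longrightarrow> Z *\<^sub>v ?x = 0\<^sub>v k"
    using scalar_prod_P_mult_vec_eq_0_iff[OF assms] P0 y by simp
  moreover have "G *\<^sub>v (transpose_mat B *\<^sub>v ?x) = G *\<^sub>v y"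
  proof (rule eq_vecI)
    fix i assume "i < dim_vec (G *\<^sub>v y)"
    then show "(G *\<^sub>v (transpose_mat B *\<^sub>v ?x)) $ i = (G *\<^sub>v y) $ i"
      using arg_cong[OF P0, of "\<lambda>v. v $ i"] unfolding P_mult_vec[OF y] by simp
  qed simp
  ultimately show "\<exists>x \<in> carrier_vec l. G * transpose_mat B *\<^sub>v x = G *\<^sub>v y \<and> (0 < mu \<longrightarrow> Z *\<^sub>v x = 0\<^sub>v k)"
    by (intro bexI[of _ ?x]) simp_all
next
  assume "\<exists>x \<in> carrier_vec l. G * transpose_mat B *\<^sub>v x = G *\<^sub>v y \<and> (0 < mu \<longrightarrow> Z *\<^sub>v x = 0\<^sub>v k)"
  then obtain x where x: "dim_vec x = l" and fit: "G *\<^sub>v (transpose_mat B *\<^sub>v x) = G *\<^sub>v y"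
    and Zx: "0 < mu \<longrightarrow> Z *\<^sub>v x = 0\<^sub>v k"
    by auto
  have "mu \<cdot>\<^sub>v (transpose_mat Z *\<^sub>v (Z *\<^sub>v x)) = 0\<^sub>v l"
    using Zx \<open>0 \<le> mu\<close> x by (cases "mu = 0") (auto intro!: eq_vecI)
  then have "M *\<^sub>v x = B *\<^sub>v (G *\<^sub>v y)"
    unfolding M_mult_vec[OF x] fit by (intro eq_vecI) auto
  then have "coeffs y = x"
    by (rule coeffs_unique[OF x])
  then show "P *\<^sub>v y = 0\<^sub>v m"
    unfolding P_mult_vec[OF y] using fit y by simp
qed

end

lemma index_sum_mat_mult_vec:
  assumes A: "\<And>i. i \<in> I \<Longrightarrow> A i \<in> carrier_mat nr nc" and v: "v \<in> carrier_vec nc" and j: "j < nr"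
  shows "(mat nr nc (\<lambda>(r, c). \<Sum>i\<in>I. A i $$ (r, c)) *\<^sub>v v) $ j = (\<Sum>i\<in>I. (A i *\<^sub>v v) $ j)"
proof -
  have "(mat nr nc (\<lambda>(r, c). \<Sum>i\<in>I. A i $$ (r, c)) *\<^sub>v v) $ j
      = (\<Sum>c\<in>{0..<nc}. (\<Sum>i\<in>I. A i $$ (j, c)) * v $ c)"
    using v j by (simp add: scalar_prod_def)
  also have "\<dots> = (\<Sum>i\<in>I. \<Sum>c\<in>{0..<nc}. A i $$ (j, c) * v $ c)"
    by (simp add: sum_distrib_right sum.swap[of _ I])
  also have "\<dots> = (\<Sum>i\<in>I. (A i *\<^sub>v v) $ j)"
  proof (rule sum.cong[OF refl])
    fix i assume "i \<in> I"
    then show "(\<Sum>c\<in>{0..<nc}. A i $$ (j, c) * v $ c) = (A i *\<^sub>v v) $ j"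
      using A[of i] v j by (auto simp: scalar_prod_def)
  qed
  finally show ?thesis .
qed

lemma sum_mat_mult_vec_eq_0_iff:
  fixes A :: "'i \<Rightarrow> real mat"
  assumes "finite I" and A: "\<And>i. i \<in> I \<Longrightarrow> A i \<in> carrier_mat m m" and v: "v \<in> carrier_vec m"
    and nonneg: "\<And>i. i \<in> I \<Longrightarrow> 0 \<le> v \<bullet> (A i *\<^sub>v v)"
    and definite: "\<And>i. i \<in> I \<Longrightarrow> v \<bullet> (A i *\<^sub>v v) = 0 \<Longrightarrow> A i *\<^sub>v v = 0\<^sub>v m"
  shows "mat m m (\<lambda>(r, c). \<Sum>i\<in>I. A i $$ (r, c)) *\<^sub>v v = 0\<^sub>v m \<longleftrightarrow> (\<forall>i\<in>I. A i *\<^sub>v v = 0\<^sub>v m)"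
    (is "?S *\<^sub>v v = _ \<longleftrightarrow> _")
proof
  assume "?S *\<^sub>v v = 0\<^sub>v m"
  then have "0 = v \<bullet> (?S *\<^sub>v v)"
    using v by simp
  also have "\<dots> = (\<Sum>j\<in>{0..<m}. v $ j * (\<Sum>i\<in>I. (A i *\<^sub>v v) $ j))"
    unfolding scalar_prod_def
    by (intro sum.cong) (simp_all del: index_mult_mat_vec add: index_sum_mat_mult_vec[OF A v])
  also have "\<dots> = (\<Sum>i\<in>I. \<Sum>j\<in>{0..<m}. v $ j * (A i *\<^sub>v v) $ j)"
    by (simp add: sum_distrib_left sum.swap[of _ I])
  also have "\<dots> = (\<Sum>i\<in>I. v \<bullet> (A i *\<^sub>v v))"
    unfolding scalar_prod_def using A by (intro sum.cong) auto
  finally show "\<forall>i\<in>I. A i *\<^sub>v v = 0\<^sub>v m"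
    using sum_nonneg_eq_0_iff[OF \<open>finite I\<close>] nonneg definite by (metis (no_types, lifting))
next
  assume "\<forall>i\<in>I. A i *\<^sub>v v = 0\<^sub>v m"
  then show "?S *\<^sub>v v = 0\<^sub>v m"
    by (intro eq_vecI) (simp_all del: index_mult_mat_vec add: index_sum_mat_mult_vec[OF A v])
qed

theorem theorem3:
  fixes n m :: nat
    and Gam B Z :: "nat \<Rightarrow> real mat"
    and l k :: "nat \<Rightarrow> nat"
    and mu :: "nat \<Rightarrow> real"
    and P_III :: "real mat"
  assumes "n \<ge> 1" and "m \<ge> 1"
    and Gam_carrier: "\<And>i. i \<in> {1..n} \<Longrightarrow> Gam i \<in> carrier_mat m m"
    and Gam_diag: "\<And>i. i \<in> {1..n} \<Longrightarrow> diagonal_mat (Gam i)"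
    and Gam_01: "\<And>i j. i \<in> {1..n} \<Longrightarrow> j < m \<Longrightarrow> Gam i $$ (j, j) \<in> {0, 1}"
    and B_carrier: "\<And>i. i \<in> {1..n} \<Longrightarrow> B i \<in> carrier_mat (l i) m"
    and Z_carrier: "\<And>i. i \<in> {1..n} \<Longrightarrow> Z i \<in> carrier_mat (k i) (l i)"
    and mu_nonneg: "\<And>i. i \<in> {1..n} \<Longrightarrow> mu i \<ge> 0"
    and M_inv: "\<And>i. i \<in> {1..n} \<Longrightarrow> invertible_mat (M_mat (Gam i) (B i) (Z i) (mu i))"
    and P_III_def: "P_III = mat m m (\<lambda>(r, c). \<Sum>i = 1..n. P_mat (Gam i) (B i) (Z i) (mu i) $$ (r, c))"
  shows "(P_III *\<^sub>v ones_vec m = 0\<^sub>v m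
          \<longleftrightarrow> (\<forall>i \<in> {1..n}. P_mat (Gam i) (B i) (Z i) (mu i) *\<^sub>v ones_vec m = 0\<^sub>v m))
       \<and> ((\<forall>i \<in> {1..n}. P_mat (Gam i) (B i) (Z i) (mu i) *\<^sub>v ones_vec m = 0\<^sub>v m)
          \<longleftrightarrow> (\<forall>i \<in> {1..n}. \<exists>x \<in> carrier_vec (l i).
                 Gam i * transpose_mat (B i) *\<^sub>v x = Gam i *\<^sub>v ones_vec m
                 \<and> (mu i > 0 \<longrightarrow> Z i *\<^sub>v x = 0\<^sub>v (k i))))"
proof -
  have proj: "regularized_projection (Gam i) (B i) (Z i) (mu i) m (l i) (k i)" if i: "i \<in> {1..n}" for i
    using Gam_carrier[OF i] Gam_diag[OF i] Gam_01[OF i] B_carrier[OF i] Z_carrier[OF i] M_inv[OF i]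
    by unfold_locales (simp_all add: diagonal_01_mat_idem transpose_diagonal_mat)
  have ones: "ones_vec m \<in> carrier_vec m"
    by (simp add: ones_vec_def)
  note P_carrier = regularized_projection.P_carrier[OF proj]
    and nonneg = regularized_projection.scalar_prod_P_mult_vec_nonneg[OF proj mu_nonneg]
    and definite = regularized_projection.scalar_prod_P_mult_vec_eq_0_iff[OF proj mu_nonneg]
    and P_kernel = regularized_projection.P_mult_vec_eq_0_iff[OF proj mu_nonneg]
  have "P_III *\<^sub>v ones_vec m = 0\<^sub>v m
      \<longleftrightarrow> (\<forall>i \<in> {1..n}. P_mat (Gam i) (B i) (Z i) (mu i) *\<^sub>v ones_vec m = 0\<^sub>v m)"
    unfolding P_III_def using P_carrier ones nonneg definite
    by (intro sum_mat_mult_vec_eq_0_iff) auto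
  then show ?thesis
    using P_kernel ones by auto
qed

end
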